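(* Let $T=T_\lambda$ ($\lambda\in(1,2)$) be a tent map with critical point $c$ and kneading sequence $K$. For $n\in\mathbb N$ and $\mathbf s\in\{0,1\}^n$, the sequence $\mathbf s^\frown\mathcal I(c)$ is the itinerary of some pre-critical point (a point $p$ with $T^i(p)=c$ for some $i$) in $[0,T(c)]$ if and only if at least one of the following holds: (1) $\mathbf s=0^n$; (2) $\sigma^k(\mathbf s^\frown\mathcal I(c))\prec K$ for every $0\le k\le n$; (3) $c$ lies in a periodic orbit of period $m$ with $\mathcal I(c)=(C^\frown\mathbf t)^\infty$ (so $\mathbf t\in\{0,1\}^{m-1}$) and $\mathbf s=\sigma^k(\mathbf t)$ (the word $\mathbf t$ with its first $k$ symbols deleted) for some $0\le k<m-1$.
   Context: For $\lambda\in(1,2]$ the tent map $T_\lambda:[0,1]\to[0,1]$ is $T_\lambda(x)=\lambda x$ on $[0,1/2]$ and $\lambda(1-x)$ on $[1/2,1]$, with critical point $c=1/2$. $\Omega=\{0,1,C\}$. The address of $x$ is $0$ if $x<c$, $C$ if $x=c$, $1$ if $x>c$; the itinerary $\mathcal I(x)$ is the sequence of addresses of $x,T(x),T^2(x),\dots$; $\mathcal I^+(x)=\lim_{y\downarrow x}\mathcal I(y)$ in the product topology on $\Omega^{\mathbb N}$. The kneading sequence is $K=\sigma(\mathcal I^+(c))$, $\sigma$ the shift; $^\frown$ denotes concatenation. A word is even if it contains an even number of $1$'s, odd otherwise. Parity lexicographic order: $0<C<1$; for sequences $\mathbf s\ne\mathbf t$ first differing at index $k$, $\mathbf s\prec\mathbf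 t$ iff either $s_0\dots s_{k-1}$ is even and $s_k<t_k$, or it is odd and $s_k>t_k$. *)

theory Defs
  imports Complex_Main
begin

datatype sym = S0 | SC | S1

fun sym_rank :: "sym \<Rightarrow> nat" where
  "sym_rank S0 = 0" | "sym_rank SC = 1" | "sym_rank S1 = 2"

definition crit :: real where "crit = 1/2"

definition tent :: "real \<Rightarrow> real \<Rightarrow> real" where
  "tent lam x = (if x \<le> 1/2 then lam * x else lam * (1 - x))"

definition addr :: "real \<Rightarrow> sym" where
  "addr x = (if x < crit then S0 else if x = crit then SC else S1)"

definition itin :: "real \<Rightarrow> real \<Rightarrow> (nat \<Rightarrow> sym)" where
  "itin lam x = (\<lambda>i. addr ((tent lam ^^ i) x))"

text \<open>Right limit of itineraries in the product topology (discrete factors):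
  coordinatewise eventual equality as y tends to x from the right.\<close>
definition itin_plus :: "real \<Rightarrow> real \<Rightarrow> (nat \<Rightarrow> sym)" where
  "itin_plus lam x = (THE s. \<forall>i. eventually (\<lambda>y. itin lam y i = s i) (at_right x))"

definition shift :: "nat \<Rightarrow> (nat \<Rightarrow> sym) \<Rightarrow> (nat \<Rightarrow> sym)" where
  "shift k u = (\<lambda>i. u (i + k))"

definition kneading :: "real \<Rightarrow> (nat \<Rightarrow> sym)" where
  "kneading lam = shift 1 (itin_plus lam crit)"

definition conc :: "sym list \<Rightarrow> (nat \<Rightarrow> sym) \<Rightarrow> (nat \<Rightarrow> sym)" where
  "conc w u = (\<lambda>i. if i < length w then w ! i else u (i - length w))"

definition per :: "sym list \<Rightarrow> (nat \<Rightarrow> sym)" where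
  "per w = (\<lambda>i. w ! (i mod length w))"

definition ones :: "(nat \<Rightarrow> sym) \<Rightarrow> nat \<Rightarrow> nat" where
  "ones s k = card {i. i < k \<and> s i = S1}"

definition plex_less :: "(nat \<Rightarrow> sym) \<Rightarrow> (nat \<Rightarrow> sym) \<Rightarrow> bool" where
  "plex_less s t = (\<exists>k. (\<forall>j<k. s j = t j) \<and> s k \<noteq> t k \<and>
      ((even (ones s k) \<and> sym_rank (s k) < sym_rank (t k)) \<or>
       (odd (ones s k) \<and> sym_rank (s k) > sym_rank (t k))))"

end

theory Submission
  imports Defs
begin

(* The proof rests on two facts about the parity-lexicographic order \<prec>.
   (a) Itineraries are monotone: x < y implies I(x) \<preceq> I(y).  The order is a strict
       total order which is open in the product topology.
   (b) The kneading sequence K is the limit of I(T y) as y decreases to c, because every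
       iterate T^i is affine with nonzero slope on a right neighbourhood of c.
   With (a) this gives: I(T c) is not below K, every pre-critical point x < T c satisfies
   I(x) \<prec> K, and every point p with I(p) \<prec> K lies in the core [0, T c].

   Conversely (1) implies (2); under (2) a realising point is obtained by pulling
   c back along s inside the core; under (3) the point T^(k+1) c realises s. *)

section \<open>The parity-lexicographic order\<close>

lemma ones_cong: "(\<forall>i<k. s i = t i) \<Longrightarrow> ones s k = ones t k"
  unfolding ones_def by (rule arg_cong[where f=card]) auto

lemma ones_Suc: "ones s (Suc k) = ones s k + (if s k = S1 then 1 else 0)"
proof -
  have "{i. i < Suc k \<and> s i = S1} = {i. i < k \<and> s i = S1} \<union> (if s k = S1 then {k} else {})"
    by (auto simp: less_Suc_eq)
  then show ?thesis unfolding ones_def by auto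
qed

lemma sym_rank_inj: "sym_rank a = sym_rank b \<Longrightarrow> a = b"
  by (cases a; cases b) auto

lemma plex_lessI:
  assumes "\<forall>j<k. s j = t j"
    and "(even (ones s k) \<and> sym_rank (s k) < sym_rank (t k)) \<or>
         (odd (ones s k) \<and> sym_rank (t k) < sym_rank (s k))"
  shows "plex_less s t"
  unfolding plex_less_def using assms by (intro exI[of _ k]) auto

lemma plex_lessE:
  assumes "plex_less s t"
  obtains k where "\<forall>j<k. s j = t j"
    "(even (ones s k) \<and> sym_rank (s k) < sym_rank (t k)) \<or>
     (odd (ones s k) \<and> sym_rank (t k) < sym_rank (s k))"
  using assms unfolding plex_less_def by blast

lemma plex_less_irrefl: "\<not> plex_less s s"
  by (simp add: plex_less_def)

lemma plex_witness_unique: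
  fixes k k' :: nat
  assumes "\<forall>j<k. s j = t j" "s k \<noteq> t k" "\<forall>j<k'. s j = t j" "s k' \<noteq> t k'"
  shows "k = k'"
proof -
  have "\<not> k < k'" "\<not> k' < k" using assms by blast+
  then show ?thesis by linarith
qed

lemma plex_less_asym:
  assumes "plex_less s t" shows "\<not> plex_less t s"
proof
  assume "plex_less t s"
  obtain k where k: "\<forall>j<k. s j = t j"
    "(even (ones s k) \<and> sym_rank (s k) < sym_rank (t k)) \<or>
     (odd (ones s k) \<and> sym_rank (t k) < sym_rank (s k))"
    using assms by (rule plex_lessE)
  obtain k' where k': "\<forall>j<k'. t j = s j"
    "(even (ones t k') \<and> sym_rank (t k') < sym_rank (s k')) \<or>
     (odd (ones t k') \<and> sym_rank (s k') < sym_rank (t k'))"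
    using \<open>plex_less t s\<close> by (rule plex_lessE)
  have "k = k'"
    using k k' by (intro plex_witness_unique[of k s t k']) auto
  moreover have "ones s k = ones t k" using k(1) by (rule ones_cong)
  ultimately show False using k(2) k'(2) by auto
qed

lemma plex_less_trans:
  assumes "plex_less s t" "plex_less t u" shows "plex_less s u"
proof -
  obtain k where k: "\<forall>j<k. s j = t j"
    "(even (ones s k) \<and> sym_rank (s k) < sym_rank (t k)) \<or>
     (odd (ones s k) \<and> sym_rank (t k) < sym_rank (s k))"
    using assms(1) by (rule plex_lessE)
  obtain k' where k': "\<forall>j<k'. t j = u j"
    "(even (ones t k') \<and> sym_rank (t k') < sym_rank (u k')) \<or>
     (odd (ones t k') \<and> sym_rank (u k') < sym_rank (t k'))"
    using assms(2) by (rule plex_lessE)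
  have s_t: "s k \<noteq> t k" and t_u: "t k' \<noteq> u k'" using k(2) k'(2) by auto
  consider "k < k'" | "k' < k" | "k = k'" by linarith
  then show ?thesis
  proof cases
    case 1
    then show ?thesis using k k' by (intro plex_lessI[of k]) auto
  next
    case 2
    moreover have "ones s k' = ones t k'" using k(1) 2 by (intro ones_cong) auto
    ultimately show ?thesis using k k' by (intro plex_lessI[of k']) auto
  next
    case 3
    moreover have "ones s k = ones t k" using k(1) by (rule ones_cong)
    ultimately show ?thesis using k k' by (intro plex_lessI[of k]) auto
  qed
qed

lemma plex_less_total:
  assumes "s \<noteq> t" shows "plex_less s t \<or> plex_less t s"
proof -
  obtain i where "s i \<noteq> t i" using assms by blast
  define k where "k = (LEAST i. s i \<noteq> t i)"
  have differ: "s k \<noteq> t k" unfolding k_def by (rule LeastI) fact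
  have agree: "\<forall>j<k. s j = t j" unfolding k_def using not_less_Least by blast
  have agree': "\<forall>j<k. t j = s j" using agree by simp
  have "ones s k = ones t k" using agree by (rule ones_cong)
  moreover have "sym_rank (s k) \<noteq> sym_rank (t k)" using differ sym_rank_inj by blast
  ultimately show ?thesis
    using plex_lessI[OF agree] plex_lessI[OF agree']
    by (cases "sym_rank (s k) < sym_rank (t k)") auto
qed

lemma plex_less_open_right:
  assumes "plex_less u v"
  shows "\<exists>j. \<forall>w. (\<forall>i\<le>j. w i = v i) \<longrightarrow> plex_less u w"
proof -
  obtain k where k: "\<forall>j<k. u j = v j"
    "(even (ones u k) \<and> sym_rank (u k) < sym_rank (v k)) \<or>
     (odd (ones u k) \<and> sym_rank (v k) < sym_rank (u k))"
    using assms by (rule plex_lessE)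
  have "plex_less u w" if "\<forall>i\<le>k. w i = v i" for w
    using k that by (intro plex_lessI[of k]) auto
  then show ?thesis by blast
qed

lemma plex_less_open_left:
  assumes "plex_less v u"
  shows "\<exists>j. \<forall>w. (\<forall>i\<le>j. w i = v i) \<longrightarrow> plex_less w u"
proof -
  obtain k where k: "\<forall>j<k. v j = u j"
    "(even (ones v k) \<and> sym_rank (v k) < sym_rank (u k)) \<or>
     (odd (ones v k) \<and> sym_rank (u k) < sym_rank (v k))"
    using assms by (rule plex_lessE)
  have "plex_less w u" if w: "\<forall>i\<le>k. w i = v i" for w
  proof -
    have "ones w k = ones v k" using w by (intro ones_cong) auto
    then show ?thesis using k w by (intro plex_lessI[of k]) auto
  qed
  then show ?thesis by blast
qed

section \<open>Itineraries\<close>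

lemma tent_crit: "tent lam crit = lam / 2"
  by (simp add: tent_def crit_def)

lemma addr_eq_SC: "addr a = SC \<longleftrightarrow> a = crit"
  by (auto simp: addr_def)

lemma addr_mono: "a \<le> b \<Longrightarrow> sym_rank (addr a) \<le> sym_rank (addr b)"
  by (auto simp: addr_def)

lemma itin_shift: "shift k (itin lam p) = itin lam ((tent lam ^^ k) p)"
  unfolding shift_def itin_def by (simp add: funpow_add)

lemma itin_Suc: "itin lam p (Suc i) = itin lam (tent lam p) i"
  by (simp add: itin_def funpow_Suc_right del: funpow.simps)

lemma shift_0 [simp]: "shift 0 u = u"
  by (simp add: shift_def)

lemma shift_conc_Cons: "shift (Suc k) (conc (a # w) u) = shift k (conc w u)"
  unfolding shift_def conc_def by auto

lemma conc_Cons_0 [simp]: "conc (a # w) u 0 = a"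
  and conc_Cons_Suc [simp]: "conc (a # w) u (Suc i) = conc w u i"
  by (simp_all add: conc_def)

lemma itin_0 [simp]: "itin lam p 0 = addr p"
  by (simp add: itin_def)

lemma conc_fixpoint_per:
  assumes "w \<noteq> []" "u = conc w u"
  shows "u = per w"
proof
  fix i show "u i = per w i"
  proof (induction i rule: less_induct)
    case (less i)
    show ?case
    proof (cases "i < length w")
      case True
      then show ?thesis by (subst assms(2)) (simp add: conc_def per_def)
    next
      case False
      then have "u i = u (i - length w)" by (subst assms(2)) (simp add: conc_def)
      also have "\<dots> = per w (i - length w)"
      proof (rule less.IH)
        show "i - length w < i" using False assms(1) by (cases w) auto
      qed
      also have "\<dots> = per w i" using False by (simp add: per_def le_mod_geq)
      finally show ?thesis .
    qed
  qed
qed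

lemma shift_per_Cons:
  assumes "k < length t"
  shows "shift (Suc k) (per (a # t)) = conc (drop k t) (per (a # t))"
proof
  fix i
  show "shift (Suc k) (per (a # t)) i = conc (drop k t) (per (a # t)) i"
  proof (cases "i < length t - k")
    case True
    then show ?thesis by (simp add: shift_def per_def conc_def add.commute)
  next
    case False
    then have "i + Suc k = (i - (length t - k)) + length (a # t)" using assms by simp
    then have "(i + Suc k) mod length (a # t) = (i - (length t - k)) mod length (a # t)"
      by (metis mod_add_self2)
    then show ?thesis using False by (simp add: shift_def per_def conc_def)
  qed
qed

lemma itin_conc_precritical:
  assumes "itin lam p = conc s (itin lam crit)"
  shows "(tent lam ^^ length s) p = crit"
proof -
  have "itin lam p (length s) = SC" using assms by (simp add: conc_def itin_def addr_def)
  then show ?thesis by (simp add: itin_def addr_eq_SC)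
qed

lemma itin_conc_noncritical:
  assumes "itin lam p = conc s (itin lam crit)" "set s \<subseteq> {S0, S1}" "k < length s"
  shows "(tent lam ^^ k) p \<noteq> crit"
proof -
  have "itin lam p k = s ! k" using assms(1,3) by (simp add: conc_def)
  moreover have "s ! k \<in> {S0, S1}" using assms(2,3) nth_mem by blast
  ultimately show ?thesis by (auto simp: itin_def addr_def)
qed

section \<open>Monotonicity of itineraries\<close>

text \<open>Along a common prefix avoiding C, T is monotone on each lap and reverses the order
  exactly on the lap with address 1; so the order of T^N x, T^N y is given by the parity of
  the prefix.\<close>

lemma iterate_order_on_common_prefix:
  assumes lam: "0 < lam" and "x < y"
    and "\<forall>i<N. itin lam x i = itin lam y i \<and> itin lam x i \<noteq> SC"
  shows "if even (ones (itin lam x) N) then (tent lam ^^ N) x < (tent lam ^^ N) y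
         else (tent lam ^^ N) y < (tent lam ^^ N) x"
  using assms(3)
proof (induction N)
  case 0 then show ?case using \<open>x < y\<close> by (simp add: ones_def)
next
  case (Suc N)
  define a where "a = (tent lam ^^ N) x"
  define b where "b = (tent lam ^^ N) y"
  have "\<forall>i<N. itin lam x i = itin lam y i \<and> itin lam x i \<noteq> SC"
    using Suc.prems less_SucI by blast
  then have IH: "if even (ones (itin lam x) N) then a < b else b < a"
    unfolding a_def b_def by (rule Suc.IH)
  have same_lap: "addr a = addr b" "addr a \<noteq> SC" and x_N: "itin lam x N = addr a"
    using Suc.prems unfolding a_def b_def itin_def by auto
  have step: "(tent lam ^^ Suc N) x = tent lam a" "(tent lam ^^ Suc N) y = tent lam b"
    by (simp_all add: a_def b_def)
  consider "a < 1/2" "b < 1/2" "addr a = S0" | "1/2 < a" "1/2 < b" "addr a = S1"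
    using same_lap by (auto simp: addr_def crit_def split: if_splits)
  then show ?case
    using IH x_N lam unfolding step ones_Suc by cases (simp_all add: tent_def)
qed

text \<open>Itineraries are monotone: they agree up to the first index where they differ, and at
  that index the order of the iterates decides the order of the symbols.\<close>

theorem itin_mono:
  assumes lam: "0 < lam" and "x < y"
  shows "plex_less (itin lam x) (itin lam y) \<or> itin lam x = itin lam y"
proof (rule disjCI)
  assume "itin lam x \<noteq> itin lam y"
  then obtain i where "itin lam x i \<noteq> itin lam y i" by blast
  define k where "k = (LEAST i. itin lam x i \<noteq> itin lam y i)"
  have differ: "itin lam x k \<noteq> itin lam y k"
    unfolding k_def by (rule LeastI) fact
  have agree: "\<forall>j<k. itin lam x j = itin lam y j"
    unfolding k_def using not_less_Least by blast
  have no_crit: "\<forall>j<k. itin lam x j \<noteq> SC"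
  proof (intro allI impI notI)
    fix j assume j: "j < k" "itin lam x j = SC"
    then have "(tent lam ^^ j) x = crit" "(tent lam ^^ j) y = crit"
      using agree by (metis addr_eq_SC itin_def)+
    then have "(tent lam ^^ (k - j + j)) x = (tent lam ^^ (k - j + j)) y"
      by (simp add: funpow_add)
    then show False using differ j by (simp add: itin_def)
  qed
  have order: "if even (ones (itin lam x) k) then (tent lam ^^ k) x < (tent lam ^^ k) y
               else (tent lam ^^ k) y < (tent lam ^^ k) x"
    using iterate_order_on_common_prefix[OF assms] agree no_crit by blast
  have "sym_rank (itin lam x k) \<noteq> sym_rank (itin lam y k)"
    using differ sym_rank_inj by blast
  moreover have "if even (ones (itin lam x) k)
      then sym_rank (itin lam x k) \<le> sym_rank (itin lam y k)
      else sym_rank (itin lam y k) \<le> sym_rank (itin lam x k)"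
    using order unfolding itin_def by (auto intro: addr_mono split: if_splits)
  ultimately show "plex_less (itin lam x) (itin lam y)"
    using plex_lessI[OF agree] by (cases "even (ones (itin lam x) k)") auto
qed

corollary itin_not_reversed:
  assumes "0 < lam" "x \<le> y"
  shows "\<not> plex_less (itin lam y) (itin lam x)"
  using itin_mono[OF assms(1), of x y] assms(2) plex_less_asym plex_less_irrefl
  by (cases "x = y") auto

section \<open>The kneading sequence as a right limit\<close>

lemma affine_eventually_one_side:
  fixes a b c d :: real
  assumes "b \<noteq> 0"
  shows "eventually (\<lambda>y. a + b*y < d) (at_right c) \<or> eventually (\<lambda>y. d < a + b*y) (at_right c)"
proof -
  have lim: "((\<lambda>y. a + b*y) \<longlongrightarrow> a + b*c) (at_right c)" by (intro tendsto_intros)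
  have right: "eventually (\<lambda>y. c < y) (at_right c)" by (rule eventually_at_right_less)
  consider "a + b*c < d" | "d < a + b*c" | "a + b*c = d" "0 < b" | "a + b*c = d" "b < 0"
    using assms by linarith
  then show ?thesis
  proof cases
    case 1 then show ?thesis using order_tendstoD(2)[OF lim] by blast
  next
    case 2 then show ?thesis using order_tendstoD(1)[OF lim] by blast
  next
    case 3
    have "eventually (\<lambda>y. d < a + b*y) (at_right c)"
      using right by eventually_elim (use 3 in \<open>auto intro: mult_strict_left_mono\<close>)
    then show ?thesis by blast
  next
    case 4
    have "eventually (\<lambda>y. a + b*y < d) (at_right c)"
      using right by eventually_elim (use 4 in \<open>auto intro: mult_strict_left_mono_neg\<close>)
    then show ?thesis by blast
  qed
qed

lemma iterate_eventually_affine: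
  assumes lam: "0 < lam"
  shows "\<exists>a b. b \<noteq> 0 \<and> eventually (\<lambda>y. (tent lam ^^ i) y = a + b*y) (at_right crit)"
proof (induction i)
  case 0 show ?case by (intro exI[of _ 0] exI[of _ 1]) simp
next
  case (Suc i)
  then obtain a b where ab: "b \<noteq> 0" "eventually (\<lambda>y. (tent lam ^^ i) y = a + b*y) (at_right crit)"
    by blast
  have "lam*b \<noteq> 0" "-lam*b \<noteq> 0" using ab(1) lam by simp_all
  moreover from affine_eventually_one_side[OF ab(1), of a "1/2" crit]
  have "eventually (\<lambda>y. (tent lam ^^ Suc i) y = lam*a + (lam*b)*y) (at_right crit) \<or>
        eventually (\<lambda>y. (tent lam ^^ Suc i) y = lam*(1-a) + (-lam*b)*y) (at_right crit)"
  proof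
    assume "eventually (\<lambda>y. a + b*y < 1/2) (at_right crit)"
    then have "eventually (\<lambda>y. (tent lam ^^ Suc i) y = lam*a + (lam*b)*y) (at_right crit)"
      using ab(2) by eventually_elim (auto simp: tent_def algebra_simps)
    then show ?thesis ..
  next
    assume "eventually (\<lambda>y. 1/2 < a + b*y) (at_right crit)"
    then have "eventually (\<lambda>y. (tent lam ^^ Suc i) y = lam*(1-a) + (-lam*b)*y) (at_right crit)"
      using ab(2) by eventually_elim (auto simp: tent_def algebra_simps)
    then show ?thesis ..
  qed
  ultimately show ?case by blast
qed

text \<open>Hence each coordinate of I(y) is eventually constant, and different from C,
  as y decreases to c; so I^+(c) exists and avoids C.\<close>

lemma itin_eventually_constant:
  assumes "0 < lam"
  shows "\<exists>a. a \<noteq> SC \<and> eventually (\<lambda>y. itin lam y i = a) (at_right crit)"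
proof -
  obtain a b where ab: "b \<noteq> 0" "eventually (\<lambda>y. (tent lam ^^ i) y = a + b*y) (at_right crit)"
    using iterate_eventually_affine[OF assms] by blast
  from affine_eventually_one_side[OF ab(1), of a crit crit] show ?thesis
  proof
    assume "eventually (\<lambda>y. a + b*y < crit) (at_right crit)"
    with ab(2) have "eventually (\<lambda>y. itin lam y i = S0) (at_right crit)"
      by eventually_elim (auto simp: itin_def addr_def)
    then show ?thesis by blast
  next
    assume "eventually (\<lambda>y. crit < a + b*y) (at_right crit)"
    with ab(2) have "eventually (\<lambda>y. itin lam y i = S1) (at_right crit)"
      by eventually_elim (auto simp: itin_def addr_def)
    then show ?thesis by blast
  qed
qed

lemma itin_plus_crit:
  assumes "0 < lam"
  shows "eventually (\<lambda>y. itin lam y i = itin_plus lam crit i) (at_right crit)"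
    and "itin_plus lam crit i \<noteq> SC"
proof -
  obtain r where r: "\<And>i. r i \<noteq> SC" "\<And>i. eventually (\<lambda>y. itin lam y i = r i) (at_right crit)"
    using itin_eventually_constant[OF assms] by metis
  have "itin_plus lam crit = r"
    unfolding itin_plus_def
  proof (rule the_equality)
    show "\<forall>i. eventually (\<lambda>y. itin lam y i = r i) (at_right crit)" using r(2) by blast
  next
    fix s assume s: "\<forall>i. eventually (\<lambda>y. itin lam y i = s i) (at_right crit)"
    show "s = r"
    proof
      fix i
      have "eventually (\<lambda>y. s i = r i) (at_right crit)"
        using s[rule_format, of i] r(2)[of i] by eventually_elim auto
      then show "s i = r i" by simp
    qed
  qed
  then show "eventually (\<lambda>y. itin lam y i = itin_plus lam crit i) (at_right crit)"
    and "itin_plus lam crit i \<noteq> SC" using r by auto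
qed

lemma kneading_eventually:
  assumes "0 < lam"
  shows "eventually (\<lambda>y. itin lam (tent lam y) i = kneading lam i) (at_right crit)"
  using itin_plus_crit(1)[OF assms, of "Suc i"] by (simp add: kneading_def shift_def itin_Suc)

lemma kneading_not_SC: "0 < lam \<Longrightarrow> kneading lam i \<noteq> SC"
  using itin_plus_crit(2) by (simp add: kneading_def shift_def)

lemma tent_eventually_near_max:
  assumes "0 < lam" "x < tent lam crit"
  shows "eventually (\<lambda>y. x < tent lam y \<and> tent lam y < tent lam crit) (at_right crit)"
proof -
  have lim: "((\<lambda>y. lam*(1-y)) \<longlongrightarrow> lam*(1-crit)) (at_right crit)" by (intro tendsto_intros)
  have "x < lam*(1-crit)" using assms(2) by (simp add: tent_def crit_def)
  from order_tendstoD(1)[OF lim this] eventually_at_right_less[of crit]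
  show ?thesis by eventually_elim (use assms(1) in \<open>auto simp: tent_def crit_def\<close>)
qed

lemma kneading_0:
  assumes "1 < lam"
  shows "kneading lam 0 = S1"
proof -
  have lam: "0 < lam" using assms by simp
  have "crit < tent lam crit" using assms by (simp add: tent_def crit_def)
  from tent_eventually_near_max[OF lam this] kneading_eventually[OF lam, of 0]
  have "eventually (\<lambda>y. kneading lam 0 = S1) (at_right crit)"
    by eventually_elim (auto simp: itin_def addr_def)
  then show ?thesis by simp
qed

text \<open>The itinerary of the maximum T(c) is not below K: otherwise I(T y) would lie above
  it for y near c, although T y < T c.\<close>

lemma kneading_le_itin_max:
  assumes "1 < lam"
  shows "\<not> plex_less (itin lam (tent lam crit)) (kneading lam)"
proof
  have lam: "0 < lam" using assms by simp
  assume "plex_less (itin lam (tent lam crit)) (kneading lam)"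
  then obtain j where j: "\<And>w. \<forall>i\<le>j. w i = kneading lam i \<Longrightarrow> plex_less (itin lam (tent lam crit)) w"
    using plex_less_open_right by blast
  have "eventually (\<lambda>y. \<forall>i\<in>{..j}. itin lam (tent lam y) i = kneading lam i) (at_right crit)"
    using kneading_eventually[OF lam] by (intro eventually_ball_finite) auto
  moreover have "crit < tent lam crit" using assms by (simp add: tent_def crit_def)
  note tent_eventually_near_max[OF lam this]
  ultimately have "eventually (\<lambda>y. plex_less (itin lam (tent lam crit)) (itin lam (tent lam y))
      \<and> tent lam y < tent lam crit) (at_right crit)"
    by eventually_elim (use j in auto)
  then obtain y where "plex_less (itin lam (tent lam crit)) (itin lam (tent lam y))"
      "tent lam y < tent lam crit"
    using eventually_happens by fastforce
  then show False using itin_not_reversed[OF lam] by fastforce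
qed

text \<open>Conversely, a pre-critical point x < T(c) has itinerary strictly below K: if K were
  below I(x), so would be I(T y) for y near c, although x < T y.  Equality is excluded
  because K does not contain C.\<close>

lemma precritical_below_kneading:
  assumes "1 < lam" "x < tent lam crit" "itin lam x j = SC"
  shows "plex_less (itin lam x) (kneading lam)"
proof -
  have lam: "0 < lam" using assms by simp
  have not_above: "\<not> plex_less (kneading lam) (itin lam x)"
  proof
    assume "plex_less (kneading lam) (itin lam x)"
    then obtain j where j: "\<And>w. \<forall>i\<le>j. w i = kneading lam i \<Longrightarrow> plex_less w (itin lam x)"
      using plex_less_open_left by blast
    have "eventually (\<lambda>y. \<forall>i\<in>{..j}. itin lam (tent lam y) i = kneading lam i) (at_right crit)"
      using kneading_eventually[OF lam] by (intro eventually_ball_finite) auto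
    moreover note tent_eventually_near_max[OF lam assms(2)]
    ultimately have "eventually (\<lambda>y. plex_less (itin lam (tent lam y)) (itin lam x)
        \<and> x < tent lam y) (at_right crit)"
      by eventually_elim (use j in auto)
    then obtain y where "plex_less (itin lam (tent lam y)) (itin lam x)" "x < tent lam y"
      using eventually_happens by fastforce
    then show False using itin_not_reversed[OF lam] by fastforce
  qed
  have "itin lam x \<noteq> kneading lam" using assms(3) kneading_not_SC[OF lam] by metis
  then show ?thesis using plex_less_total not_above by blast
qed

text \<open>A point whose itinerary is below K lies in the core [0, T c]: a point beyond T(c)
  has itinerary at least I(T c), which is at least K.\<close>

lemma below_kneading_in_core:
  assumes "1 < lam" "plex_less (itin lam p) (kneading lam)"
  shows "p \<le> tent lam crit"
proof (rule ccontr)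
  have lam: "0 < lam" using assms by simp
  assume "\<not> p \<le> tent lam crit"
  then have "plex_less (itin lam (tent lam crit)) (itin lam p) \<or> itin lam (tent lam crit) = itin lam p"
    using itin_mono[OF lam] by simp
  moreover have "plex_less (kneading lam) (itin lam (tent lam crit)) \<or> kneading lam = itin lam (tent lam crit)"
    using kneading_le_itin_max[OF assms(1)] plex_less_total by blast
  ultimately show False
    using assms(2) plex_less_trans plex_less_irrefl by metis
qed

section \<open>Dynamics on the core\<close>

lemma tent_iterate_in_core:
  assumes "0 < lam" "lam \<le> 2" "0 \<le> x" "x \<le> tent lam crit"
  shows "0 \<le> (tent lam ^^ k) x \<and> (tent lam ^^ k) x \<le> tent lam crit"
proof (induction k)
  case 0 then show ?case using assms by simp
next
  case (Suc k)
  define z where "z = (tent lam ^^ k) x"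
  have "0 \<le> z" "z \<le> 1" using Suc assms unfolding z_def tent_crit by auto
  then have "0 \<le> tent lam z \<and> tent lam z \<le> lam/2"
    using assms(1) by (auto simp: tent_def mult_left_le mult_nonneg_nonneg)
  then show ?case by (simp add: z_def tent_crit)
qed

lemma tent_eq_max: "0 < lam \<Longrightarrow> tent lam x = tent lam crit \<Longrightarrow> x = crit"
  by (auto simp: tent_def crit_def split: if_splits)

lemma tent_preimage:
  assumes "0 < lam" "0 \<le> q" "q < tent lam crit" "a \<in> {S0, S1}"
  obtains p where "0 \<le> p" "addr p = a" "tent lam p = q"
proof -
  have q: "0 \<le> q" "q < lam / 2" using assms(2,3) by (simp_all add: tent_crit)
  have left: "0 \<le> q / lam" "addr (q / lam) = S0" "tent lam (q / lam) = q"
    using assms(1) q by (simp_all add: tent_def addr_def crit_def field_simps)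
  have right: "0 \<le> 1 - q / lam" "addr (1 - q / lam) = S1" "tent lam (1 - q / lam) = q"
    using assms(1) q by (simp_all add: tent_def addr_def crit_def field_simps)
  show thesis using assms(4) that left right by blast
qed

text \<open>A word of zeros is admissible: every shift starts with 0 or C, while K starts with 1.\<close>

lemma zero_word_admissible:
  assumes "1 < lam" "k \<le> n"
  shows "plex_less (shift k (conc (replicate n S0) (itin lam crit))) (kneading lam)"
proof -
  have "shift k (conc (replicate n S0) (itin lam crit)) 0 = (if k < n then S0 else SC)"
    using assms(2) by (auto simp: shift_def conc_def itin_def addr_def)
  then show ?thesis
    using kneading_0[OF assms(1)] by (intro plex_lessI[of 0]) (auto simp: ones_def)
qed

text \<open>An admissible word is realised in the core, by pulling c back along the word:
  admissibility of the tail gives a point q < T c with a preimage on the required lap, and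
  admissibility of the whole word keeps this preimage in the core.\<close>

lemma admissible_word_realized:
  assumes lam: "1 < lam"
  shows "set s \<subseteq> {S0, S1} \<Longrightarrow>
    \<forall>k\<le>length s. plex_less (shift k (conc s (itin lam crit))) (kneading lam) \<Longrightarrow>
    \<exists>p. 0 \<le> p \<and> p \<le> tent lam crit \<and> itin lam p = conc s (itin lam crit)"
proof (induction s)
  case Nil
  show ?case using lam by (intro exI[of _ crit]) (auto simp: tent_def crit_def conc_def)
next
  case (Cons a s)
  have tail: "\<forall>k\<le>length s. plex_less (shift k (conc s (itin lam crit))) (kneading lam)"
    using Cons.prems(2) by (metis Suc_le_mono length_Cons shift_conc_Cons)
  then obtain q where q: "0 \<le> q" "q \<le> tent lam crit" "itin lam q = conc s (itin lam crit)"
    using Cons by auto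
  have "plex_less (itin lam q) (kneading lam)"
    using tail q(3) by auto
  then have "q < tent lam crit" using q(2) kneading_le_itin_max[OF lam] by (metis order_less_le)
  moreover have "a \<in> {S0, S1}" using Cons.prems(1) by simp
  ultimately obtain p where p: "0 \<le> p" "addr p = a" "tent lam p = q"
    using tent_preimage[of lam q a] lam q(1) by auto
  have itin_p: "itin lam p = conc (a # s) (itin lam crit)"
  proof
    fix i show "itin lam p i = conc (a # s) (itin lam crit) i"
      using p q(3) by (cases i) (simp_all add: itin_Suc)
  qed
  have "plex_less (itin lam p) (kneading lam)"
    using Cons.prems(2) itin_p by (metis le0 shift_0)
  then have "p \<le> tent lam crit" by (rule below_kneading_in_core[OF lam])
  then show ?case using p(1) itin_p by blast
qed

lemma periodic_word_realized:
  assumes "0 < lam" "lam \<le> 2" "itin lam crit = per (SC # t)" "k < length t"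
  shows "\<exists>p. 0 \<le> p \<and> p \<le> tent lam crit \<and> itin lam p = conc (drop k t) (itin lam crit)"
proof -
  define p where "p = (tent lam ^^ Suc k) crit"
  have "0 \<le> p \<and> p \<le> tent lam crit"
    using tent_iterate_in_core[OF assms(1,2), of "tent lam crit" k] assms(1)
    unfolding p_def by (simp add: funpow_Suc_right tent_crit del: funpow.simps)
  moreover have "itin lam p = conc (drop k t) (itin lam crit)"
    using shift_per_Cons[OF assms(4), of SC] itin_shift[of "Suc k" lam crit]
    unfolding p_def assms(3) by simp
  ultimately show ?thesis by blast
qed

text \<open>A pre-critical point below T(c) realising s^I(c) has all iterates up to time |s|
  below T(c) (they lie in the core and are not the maximum, having no earlier visit to c),
  so every shift of s^I(c) is below K.\<close>

lemma precritical_word_admissible: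
  assumes lam: "1 < lam" "lam \<le> 2"
    and p: "0 \<le> p" "p < tent lam crit" "itin lam p = conc s (itin lam crit)"
    and s: "set s \<subseteq> {S0, S1}" and "k \<le> length s"
  shows "plex_less (shift k (conc s (itin lam crit))) (kneading lam)"
proof -
  have lam0: "0 < lam" using lam by simp
  define x where "x = (tent lam ^^ k) p"
  have "x \<le> tent lam crit"
    using tent_iterate_in_core[OF lam0 lam(2) p(1)] p(2) unfolding x_def by simp
  moreover have "x \<noteq> tent lam crit"
  proof (cases k)
    case 0 then show ?thesis using p(2) by (simp add: x_def)
  next
    case (Suc k')
    have "(tent lam ^^ k') p \<noteq> crit"
      using itin_conc_noncritical[OF p(3) s] Suc \<open>k \<le> length s\<close> by simp
    then show ?thesis using tent_eq_max[OF lam0] Suc by (auto simp: x_def)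
  qed
  moreover have "itin lam x (length s - k) = SC"
  proof -
    have "(tent lam ^^ (length s - k)) x = (tent lam ^^ (length s - k + k)) p"
      unfolding x_def by (simp add: funpow_add)
    then have "(tent lam ^^ (length s - k)) x = (tent lam ^^ length s) p"
      using \<open>k \<le> length s\<close> by simp
    then show ?thesis using itin_conc_precritical[OF p(3)] by (simp add: itin_def addr_def)
  qed
  ultimately have "plex_less (itin lam x) (kneading lam)"
    using precritical_below_kneading[OF lam(1)] by simp
  then show ?thesis using p(3) itin_shift[of k lam p] by (simp add: x_def)
qed

lemma max_precritical_periodic:
  assumes lam: "1 < lam"
    and s: "set s \<subseteq> {S0, S1}" "itin lam (tent lam crit) = conc s (itin lam crit)"
  shows "s \<noteq> []" "(tent lam ^^ Suc (length s)) crit = crit"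
    "\<forall>j. 0 < j \<and> j < Suc (length s) \<longrightarrow> (tent lam ^^ j) crit \<noteq> crit"
    "itin lam crit = per (SC # s)"
proof -
  have "tent lam crit \<noteq> crit" using lam by (simp add: tent_def crit_def)
  then show "s \<noteq> []"
    using itin_conc_precritical[OF s(2)] by auto
  show "(tent lam ^^ Suc (length s)) crit = crit"
    using itin_conc_precritical[OF s(2)] by (simp add: funpow_Suc_right del: funpow.simps)
  show "\<forall>j. 0 < j \<and> j < Suc (length s) \<longrightarrow> (tent lam ^^ j) crit \<noteq> crit"
    using itin_conc_noncritical[OF s(2,1)]
    by (auto simp: gr0_conv_Suc funpow_Suc_right simp del: funpow.simps)
  have "itin lam crit = conc (SC # s) (itin lam crit)"
  proof
    fix i show "itin lam crit i = conc (SC # s) (itin lam crit) i"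
      using s(2) by (cases i) (simp_all add: itin_Suc addr_def)
  qed
  then show "itin lam crit = per (SC # s)" by (rule conc_fixpoint_per[rotated]) simp
qed

theorem mainTheorem5:
  fixes lam :: real and n :: nat and s :: "sym list"
  assumes "1 < lam" and "lam < 2"
    and "length s = n" and "set s \<subseteq> {S0, S1}"
  shows "(\<exists>p. 0 \<le> p \<and> p \<le> tent lam crit \<and> (\<exists>i. (tent lam ^^ i) p = crit)
            \<and> itin lam p = conc s (itin lam crit))
     \<longleftrightarrow>
     (s = replicate n S0
      \<or> (\<forall>k\<le>n. plex_less (shift k (conc s (itin lam crit))) (kneading lam))
      \<or> (\<exists>m t k. 1 \<le> m \<and> (tent lam ^^ m) crit = crit
            \<and> (\<forall>j. 0 < j \<and> j < m \<longrightarrow> (tent lam ^^ j) crit \<noteq> crit)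
            \<and> length t = m - 1 \<and> set t \<subseteq> {S0, S1}
            \<and> itin lam crit = per (SC # t)
            \<and> k < m - 1 \<and> s = drop k t))"
  (is "?realized \<longleftrightarrow> ?zeros \<or> ?admissible \<or> ?periodic")
proof
  assume ?realized
  then obtain p where p: "0 \<le> p" "p \<le> tent lam crit" "itin lam p = conc s (itin lam crit)"
    by blast
  show "?zeros \<or> ?admissible \<or> ?periodic"
  proof (cases "p = tent lam crit")
    case True
    then have "?periodic"
      using max_precritical_periodic[OF assms(1,4)] p(3) assms(3,4)
      by (intro exI[of _ "Suc n"] exI[of _ s] exI[of _ 0]) auto
    then show ?thesis by blast
  next
    case False
    then have ?admissible
      using precritical_word_admissible[OF assms(1) _ p(1) _ p(3) assms(4)] assms(2,3) p(2) by simp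
    then show ?thesis by blast
  qed
next
  have lam: "0 < lam" "lam \<le> 2" using assms(1,2) by simp_all
  assume "?zeros \<or> ?admissible \<or> ?periodic"
  then have "\<exists>p. 0 \<le> p \<and> p \<le> tent lam crit \<and> itin lam p = conc s (itin lam crit)"
  proof (elim disjE exE conjE)
    assume ?zeros
    then show ?thesis
      using admissible_word_realized[OF assms(1)] zero_word_admissible[OF assms(1)] assms(3,4) by simp
  next
    assume ?admissible
    then show ?thesis using admissible_word_realized[OF assms(1)] assms(3,4) by simp
  next
    fix m t k assume "length t = m - 1" "itin lam crit = per (SC # t)" "k < m - 1" "s = drop k t"
    then show ?thesis using periodic_word_realized[OF lam] by simp
  qed
  then show ?realized using itin_conc_precritical by blast
qed

end
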